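(* Let $V$ be a finite-dimensional irreducible $T$-module. Let $r,\delta,t,\delta^*$ be the nonnegative integers with $r+\delta\le d$, $t+\delta^*\le d$ such that for $0\le i\le d$: $e^*_iV\ne0$ if and only if $r\le i\le r+\delta$, and $e_iV\ne0$ if and only if $t\le i\le t+\delta^*$. Then $\delta=\delta^*$, and the sequence $(a;\{e_i\}_{i=t}^{t+\delta};a^*;\{e^*_i\}_{i=r}^{r+\delta})$ acts on $V$ as a tridiagonal system.
   Context: $\mathbb{F}$ is a field, $d\ge0$, and $\{\theta_i\}_{i=0}^d$, $\{\theta^*_i\}_{i=0}^d$ are scalars in $\mathbb{F}$ with $\theta_i\ne\theta_j$, $\theta^*_i\ne\theta^*_j$ for $i\ne j$, such that $\frac{\theta_{i-2}-\theta_{i+1}}{\theta_{i-1}-\theta_i}$ and $\frac{\theta^*_{i-2}-\theta^*_{i+1}}{\theta^*_{i-1}-\theta^*_i}$ are equal and independent of $i$ for $2\le i\le d-1$. $T$ is the associative $\mathbb{F}$-algebra with $1$ generated by $a,e_0,\dots,e_d,a^*,e^*_0,\dots,e^*_d$ with relations $e_ie_j=\delta_{ij}e_i$, $e^*_ie^*_j=\delta_{ij}e^*_i$, $\sum_ie_i=\sum_ie^*_i=1$, $a=\sum_i\theta_ie_i$, $a^*=\sum_i\theta^*_ie^*_i$, and $e^*_ia^ke^*_j=0$, $e_i{a^*}^ke_j=0$ whenever $0\le i,j,k\le d$ and $k<|i-j|$. (The integers $r,\delta,t,\delta^*$ exist by a preceding lemma.) A tridiagonal pair on a finite-dimensional nonzero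 space $V$ is a pair of diagonalizable linear maps $A,A^*$ such that some ordering $V_0,\dots,V_d$ of the eigenspaces of $A$ satisfies $A^*V_i\subseteq V_{i-1}+V_i+V_{i+1}$, some ordering $V^*_0,\dots,V^*_\delta$ of eigenspaces of $A^*$ satisfies $AV^*_i\subseteq V^*_{i-1}+V^*_i+V^*_{i+1}$ (out-of-range terms zero), and no subspace $W\ne0,V$ is invariant under both; such orderings are standard. A tridiagonal system $(A;\{E_i\};A^*;\{E^*_i\})$ consists of a tridiagonal pair together with standard orderings of the primitive idempotents (projections onto eigenspaces along the others) of $A$ and of $A^*$. *)

theory Defs
  imports Complex_Main
begin

text \<open>A sequence E 0, ..., E D of maps on the whole space (type 'v, scalar
multiplication scale) is the sequence of primitive idempotents of A in some
ordering: there are pairwise distinct scalars th 0, ..., th D such that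
every E i v lies in the th i - eigenspace of A, each E i is nonzero, and
every vector is the sum of its components E i v.  (Since eigenspaces for
distinct eigenvalues are independent, this says exactly that A is
diagonalizable with eigenspaces E 0 V, ..., E D V and that E i is the
projection onto E i V along the other eigenspaces.)\<close>
definition primitive_idempotent_seq ::
  "('f::field \<Rightarrow> 'v::ab_group_add \<Rightarrow> 'v) \<Rightarrow> ('v \<Rightarrow> 'v) \<Rightarrow> (nat \<Rightarrow> 'v \<Rightarrow> 'v) \<Rightarrow> nat \<Rightarrow> bool"
where
  "primitive_idempotent_seq scale A E D \<longleftrightarrow>
     (\<exists>th :: nat \<Rightarrow> 'f. inj_on th {..D}
        \<and> (\<forall>i\<le>D. \<forall>v. A (E i v) = scale (th i) (E i v))
        \<and> (\<forall>i\<le>D. \<exists>v. E i v \<noteq> 0)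
        \<and> (\<forall>v. (\<Sum>i\<le>D. E i v) = v))"

definition tridiagonal_action ::
  "('v::ab_group_add \<Rightarrow> 'v) \<Rightarrow> (nat \<Rightarrow> 'v \<Rightarrow> 'v) \<Rightarrow> nat \<Rightarrow> bool"
where
  "tridiagonal_action B E D \<longleftrightarrow>
     (\<forall>i\<le>D. \<forall>v. \<exists>u :: nat \<Rightarrow> 'v.
        B (E i v) = (\<Sum>j\<in>{j. j \<le> D \<and> i \<le> Suc j \<and> j \<le> Suc i}. E j (u j)))"

definition tridiagonal_system ::
  "('f::field \<Rightarrow> 'v::ab_group_add \<Rightarrow> 'v) \<Rightarrow> ('v \<Rightarrow> 'v) \<Rightarrow> (nat \<Rightarrow> 'v \<Rightarrow> 'v) \<Rightarrow> nat
    \<Rightarrow> ('v \<Rightarrow> 'v) \<Rightarrow> (nat \<Rightarrow> 'v \<Rightarrow> 'v) \<Rightarrow> nat \<Rightarrow> bool"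
where
  "tridiagonal_system scale A E D As Es Ds \<longleftrightarrow>
     Vector_Spaces.linear scale scale A \<and> Vector_Spaces.linear scale scale As
     \<and> primitive_idempotent_seq scale A E D
     \<and> primitive_idempotent_seq scale As Es Ds
     \<and> tridiagonal_action As E D
     \<and> tridiagonal_action A Es Ds
     \<and> (\<forall>W. module.subspace scale W \<and> A ` W \<subseteq> W \<and> As ` W \<subseteq> W
            \<longrightarrow> W = {0} \<or> W = UNIV)"

definition T_module ::
  "('f::field \<Rightarrow> 'v::ab_group_add \<Rightarrow> 'v) \<Rightarrow> nat \<Rightarrow> (nat \<Rightarrow> 'f) \<Rightarrow> (nat \<Rightarrow> 'f)
    \<Rightarrow> ('v \<Rightarrow> 'v) \<Rightarrow> (nat \<Rightarrow> 'v \<Rightarrow> 'v) \<Rightarrow> ('v \<Rightarrow> 'v) \<Rightarrow> (nat \<Rightarrow> 'v \<Rightarrow> 'v) \<Rightarrow> bool"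
where
  "T_module scale d th ths a e as es \<longleftrightarrow>
     Vector_Spaces.linear scale scale a \<and> Vector_Spaces.linear scale scale as
     \<and> (\<forall>i\<le>d. Vector_Spaces.linear scale scale (e i) \<and> Vector_Spaces.linear scale scale (es i))
     \<and> (\<forall>i\<le>d. \<forall>j\<le>d. \<forall>v. e i (e j v) = (if i = j then e i v else 0))
     \<and> (\<forall>i\<le>d. \<forall>j\<le>d. \<forall>v. es i (es j v) = (if i = j then es i v else 0))
     \<and> (\<forall>v. (\<Sum>i\<le>d. e i v) = v) \<and> (\<forall>v. (\<Sum>i\<le>d. es i v) = v)
     \<and> (\<forall>v. a v = (\<Sum>i\<le>d. scale (th i) (e i v)))
     \<and> (\<forall>v. as v = (\<Sum>i\<le>d. scale (ths i) (es i v)))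
     \<and> (\<forall>i\<le>d. \<forall>j\<le>d. \<forall>k\<le>d. k < nat \<bar>int i - int j\<bar> \<longrightarrow>
          (\<forall>v. es i ((a ^^ k) (es j v)) = 0) \<and> (\<forall>v. e i ((as ^^ k) (e j v)) = 0))"

definition irreducible_T_module ::
  "('f::field \<Rightarrow> 'v::ab_group_add \<Rightarrow> 'v) \<Rightarrow> nat \<Rightarrow> (nat \<Rightarrow> 'f) \<Rightarrow> (nat \<Rightarrow> 'f)
    \<Rightarrow> ('v \<Rightarrow> 'v) \<Rightarrow> (nat \<Rightarrow> 'v \<Rightarrow> 'v) \<Rightarrow> ('v \<Rightarrow> 'v) \<Rightarrow> (nat \<Rightarrow> 'v \<Rightarrow> 'v) \<Rightarrow> bool"
where
  "irreducible_T_module scale d th ths a e as es \<longleftrightarrow>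
     T_module scale d th ths a e as es \<and> (\<exists>v::'v. v \<noteq> 0)
     \<and> (\<forall>W. module.subspace scale W \<and> a ` W \<subseteq> W \<and> as ` W \<subseteq> W
            \<and> (\<forall>i\<le>d. e i ` W \<subseteq> W \<and> es i ` W \<subseteq> W)
            \<longrightarrow> W = {0} \<or> W = UNIV)"

end

theory Submission imports Defs begin

text \<open>The e i (resp. es i) are the spectral projections of a (resp. as), hence polynomials
  in it, so irreducibility already forbids nontrivial subspaces invariant under a and as
  alone; this gives the tridiagonal-system part directly.  For \<delta> = \<delta>s consider the pieces
  U i = (es 0 V + ... + es (r + i) V) \<inter> (e (t + i) V + ... + e d V) of the split
  decomposition: a - th (t + i) maps U i into U (i + 1) and as - ths (r + i) maps U i into
  U (i - 1), so the span of all U i is a nonzero invariant subspace, hence V.  If \<delta>s < \<delta>,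
  then U i = 0 for i > \<delta>s and es (r + \<delta>) kills U i for i \<le> \<delta>s, so es (r + \<delta>) = 0, which
  is absurd; by the a/as symmetry \<delta> = \<delta>s.\<close>

definition block_tridiagonal :: "nat \<Rightarrow> (nat \<Rightarrow> 'v::zero \<Rightarrow> 'v) \<Rightarrow> ('v \<Rightarrow> 'v) \<Rightarrow> bool" where
  "block_tridiagonal d E B \<longleftrightarrow>
     (\<forall>i\<le>d. \<forall>j\<le>d. \<forall>v. i + 2 \<le> j \<or> j + 2 \<le> i \<longrightarrow> E i (B (E j v)) = 0)"

lemma block_tridiagonalD:
  "block_tridiagonal d E B \<Longrightarrow> i \<le> d \<Longrightarrow> j \<le> d \<Longrightarrow> i + 2 \<le> j \<or> j + 2 \<le> i \<Longrightarrow>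
    E i (B (E j v)) = 0"
  unfolding block_tridiagonal_def by blast

locale idempotent_decomposition = vector_space scale
  for scale :: "'f::field \<Rightarrow> 'v::ab_group_add \<Rightarrow> 'v" +
  fixes d :: nat and th :: "nat \<Rightarrow> 'f" and A :: "'v \<Rightarrow> 'v" and E :: "nat \<Rightarrow> 'v \<Rightarrow> 'v"
  assumes linear_E: "i \<le> d \<Longrightarrow> Vector_Spaces.linear scale scale (E i)"
    and E_E: "i \<le> d \<Longrightarrow> j \<le> d \<Longrightarrow> E i (E j v) = (if i = j then E i v else 0)"
    and sum_E: "(\<Sum>i\<le>d. E i v) = v"
    and A_eq_sum: "A v = (\<Sum>i\<le>d. scale (th i) (E i v))"
    and inj_th: "inj_on th {..d}"
begin

sublocale vsp: vector_space_pair scale scale ..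

lemma E_A: assumes j: "j \<le> d" shows "E j (A u) = scale (th j) (E j u)"
proof -
  have "E j (A u) = (\<Sum>i\<le>d. E j (scale (th i) (E i u)))"
    by (simp add: A_eq_sum vsp.linear_sum[OF linear_E[OF j]])
  also have "\<dots> = (\<Sum>i\<le>d. if i = j then scale (th j) (E j u) else 0)"
    by (rule sum.cong) (auto simp: vsp.linear_scale[OF linear_E[OF j]] E_E j)
  finally show ?thesis using j by simp
qed

lemma A_E: assumes j: "j \<le> d" shows "A (E j v) = scale (th j) (E j v)"
proof -
  have "A (E j v) = (\<Sum>i\<le>d. if i = j then scale (th j) (E j v) else 0)"
    unfolding A_eq_sum by (rule sum.cong) (auto simp: E_E j)
  then show ?thesis using j by simp
qed

lemma E_A_minus_scale:
  "j \<le> d \<Longrightarrow> E j (A u - scale c u) = scale (th j - c) (E j u)"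
  by (simp add: vsp.linear_diff[OF linear_E] vsp.linear_scale[OF linear_E] E_A
      scale_left_diff_distrib)

lemma sum_E_subset:
  assumes "S \<subseteq> {..d}" and "\<forall>j\<le>d. j \<notin> S \<longrightarrow> E j x = 0"
  shows "(\<Sum>j\<in>S. E j x) = x"
proof -
  have "(\<Sum>j\<in>S. E j x) = (\<Sum>j\<le>d. E j x)"
    by (rule sum.mono_neutral_left) (use assms in auto)
  then show ?thesis by (simp add: sum_E)
qed

lemma eq_0_if_E_eq_0: "\<forall>j\<le>d. E j x = 0 \<Longrightarrow> x = 0"
  using sum_E_subset[of "{}" x] by simp

text \<open>If A u - th m u is supported on S, its components determine those of u on S
  because the th k - th m are nonzero there; the remaining component E m u is then
  u minus the others.\<close>
lemma E_mem_invariant_subspace_of_support: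
  assumes W: "subspace W" and AW: "A ` W \<subseteq> W"
    and S: "finite S" "S \<subseteq> {..d}"
    and u: "u \<in> W" "\<forall>j\<le>d. j \<notin> S \<longrightarrow> E j u = 0" and i: "i \<in> S"
  shows "E i u \<in> W"
  using S u i
proof (induction S arbitrary: u i rule: finite_induct)
  case empty
  then show ?case by simp
next
  case (insert m S)
  have m: "m \<le> d" using insert.prems by auto
  define u' where "u' = A u - scale (th m) u"
  have "u' \<in> W" unfolding u'_def
    using AW insert.prems W by (meson image_subset_iff subspace_diff subspace_scale)
  moreover have "\<forall>j\<le>d. j \<notin> S \<longrightarrow> E j u' = 0"
    using insert.prems by (auto simp: u'_def E_A_minus_scale)
  ultimately have IH: "E k u' \<in> W" if "k \<in> S" for k
    using insert.IH insert.prems that by auto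
  have E_S: "E k u \<in> W" if k: "k \<in> S" for k
  proof -
    have kd: "k \<le> d" using k insert.prems by auto
    with m k insert.hyps have "th k - th m \<noteq> 0" using inj_th by (auto simp: inj_on_def)
    then have "E k u = scale (inverse (th k - th m)) (E k u')"
      by (simp add: u'_def E_A_minus_scale[OF kd])
    then show ?thesis using IH[OF k] W subspace_scale by metis
  qed
  have "u = E m u + (\<Sum>j\<in>S. E j u)"
    using sum_E_subset[of "insert m S" u] insert.hyps insert.prems by simp
  then have "E m u = u - (\<Sum>j\<in>S. E j u)"
    by (simp add: eq_diff_eq)
  moreover have "(\<Sum>j\<in>S. E j u) \<in> W" by (rule subspace_sum[OF W E_S])
  ultimately have "E m u \<in> W" using subspace_diff[OF W \<open>u \<in> W\<close>] by simp
  then show ?case using insert.prems E_S by auto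
qed

lemma E_image_invariant_subspace:
  "subspace W \<Longrightarrow> A ` W \<subseteq> W \<Longrightarrow> i \<le> d \<Longrightarrow> E i ` W \<subseteq> W"
  using E_mem_invariant_subspace_of_support[of W "{..d}"] by auto

lemma primitive_idempotent_seq_window:
  assumes td: "t + D \<le> d"
    and supp: "\<forall>i\<le>d. (\<exists>v. E i v \<noteq> 0) \<longleftrightarrow> t \<le> i \<and> i \<le> t + D"
  shows "primitive_idempotent_seq scale A (\<lambda>i. E (t + i)) D"
  unfolding primitive_idempotent_seq_def
proof (intro exI[of _ "\<lambda>i. th (t + i)"] conjI allI impI)
  have "(+) t ` {..D} \<subseteq> {..d}" using td by auto
  then show "inj_on (\<lambda>i. th (t + i)) {..D}"
    using comp_inj_on[of "(+) t" "{..D}" th] inj_on_subset[OF inj_th] by (simp add: o_def)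
  show "A (E (t + i) v) = scale (th (t + i)) (E (t + i) v)" if "i \<le> D" for i v
    using A_E td that by simp
  show "\<exists>v. E (t + i) v \<noteq> 0" if "i \<le> D" for i
    using supp td that by simp
  show "(\<Sum>i\<le>D. E (t + i) v) = v" for v
  proof -
    have "(\<Sum>i\<le>D. E (t + i) v) = (\<Sum>j\<in>{t..t + D}. E j v)"
      using sum.shift_bounds_cl_nat_ivl[of "\<lambda>j. E j v" 0 t D]
      by (simp add: atMost_atLeast0 add.commute)
    also have "\<dots> = v"
      by (rule sum_E_subset) (use td supp in force)+
    finally show ?thesis .
  qed
qed

lemma E_B_eq_sum:
  "Vector_Spaces.linear scale scale B \<Longrightarrow> j \<le> d \<Longrightarrow>
    E j (B x) = (\<Sum>i\<le>d. E j (B (E i x)))"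
  by (subst (1) sum_E[of x, symmetric]) (simp add: vsp.linear_sum[OF linear_E] vsp.linear_sum)

lemma tridiagonal_action_window:
  assumes B: "Vector_Spaces.linear scale scale B" "block_tridiagonal d E B"
    and td: "t + D \<le> d"
    and supp: "\<forall>i\<le>d. (\<exists>v. E i v \<noteq> 0) \<longleftrightarrow> t \<le> i \<and> i \<le> t + D"
  shows "tridiagonal_action B (\<lambda>i. E (t + i)) D"
  unfolding tridiagonal_action_def
proof (intro allI impI exI)
  fix i v assume i: "i \<le> D"
  define J where "J = {j. j \<le> D \<and> i \<le> Suc j \<and> j \<le> Suc i}"
  define x where "x = B (E (t + i) v)"
  have "E k x = 0" if "k \<le> d" "k \<notin> (+) t ` J" for k
  proof (cases "t \<le> k \<and> k \<le> t + D")
    case True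
    then have "k - t \<notin> J" using that by (auto simp: image_iff)
    then have "k + 2 \<le> t + i \<or> t + i + 2 \<le> k"
      using True by (auto simp: J_def)
    moreover have "t + i \<le> d" using td i by simp
    ultimately show ?thesis
      using block_tridiagonalD[OF B(2) that(1)] unfolding x_def by blast
  qed (use supp that in auto)
  then have "x = (\<Sum>k\<in>(+) t ` J. E k x)"
    by (intro sum_E_subset[symmetric]) (use td in \<open>auto simp: J_def\<close>)
  also have "\<dots> = (\<Sum>j\<in>J. E (t + j) x)"
    by (rule sum.reindex_cong[of "(+) t"]) (auto simp: inj_on_def)
  finally show "B (E (t + i) v) = (\<Sum>j\<in>{j. j \<le> D \<and> i \<le> Suc j \<and> j \<le> Suc i}. E (t + j) x)"
    unfolding J_def x_def .
qed

definition flag_below :: "nat \<Rightarrow> 'v set" where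
  "flag_below k = {x. \<forall>j\<le>d. k < j \<longrightarrow> E j x = 0}"

definition flag_above :: "nat \<Rightarrow> 'v set" where
  "flag_above k = {x. \<forall>j\<le>d. j < k \<longrightarrow> E j x = 0}"

lemma subspace_flag_below: "subspace (flag_below k)"
  unfolding subspace_def flag_below_def
  by (simp add: vsp.linear_0[OF linear_E] vsp.linear_add[OF linear_E] vsp.linear_scale[OF linear_E])

lemma subspace_flag_above: "subspace (flag_above k)"
  unfolding subspace_def flag_above_def
  by (simp add: vsp.linear_0[OF linear_E] vsp.linear_add[OF linear_E] vsp.linear_scale[OF linear_E])

lemma flag_below_mono: "k \<le> k' \<Longrightarrow> flag_below k \<subseteq> flag_below k'"
  unfolding flag_below_def by auto

lemma flag_above_eq_UNIV: "\<forall>j\<le>d. j < k \<longrightarrow> (\<forall>x. E j x = 0) \<Longrightarrow> flag_above k = UNIV"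
  unfolding flag_above_def by auto

lemma A_minus_scale_flag_above:
  "x \<in> flag_above k \<Longrightarrow> A x - scale (th k) x \<in> flag_above (Suc k)"
  unfolding flag_above_def by (auto simp: E_A_minus_scale less_Suc_eq)

lemma A_minus_scale_flag_below:
  "x \<in> flag_below k \<Longrightarrow> A x - scale (th k) x \<in> flag_below (k - 1)"
  unfolding flag_below_def
proof (intro CollectI allI impI)
  fix j assume x: "x \<in> {x. \<forall>j\<le>d. k < j \<longrightarrow> E j x = 0}" and j: "j \<le> d" "k - 1 < j"
  then have "j = k \<or> E j x = 0" by auto
  then show "E j (A x - scale (th k) x) = 0" by (auto simp: E_A_minus_scale[OF j(1)])
qed

lemma block_tridiagonal_flag_below:
  assumes B: "Vector_Spaces.linear scale scale B" "block_tridiagonal d E B"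
    and x: "x \<in> flag_below k"
  shows "B x \<in> flag_below (Suc k)"
  unfolding flag_below_def
proof (intro CollectI allI impI)
  fix j assume j: "j \<le> d" "Suc k < j"
  have "E j (B (E i x)) = 0" if "i \<le> d" for i
  proof (cases "k < i")
    case True
    then have "E i x = 0" using x that by (simp add: flag_below_def)
    then show ?thesis by (simp add: vsp.linear_0[OF B(1)] vsp.linear_0[OF linear_E[OF j(1)]])
  next
    case False
    then have "i + 2 \<le> j" using j by linarith
    then show ?thesis using block_tridiagonalD[OF B(2) j(1) that] by blast
  qed
  then show "E j (B x) = 0" using E_B_eq_sum[OF B(1) j(1), of x] by simp
qed

lemma block_tridiagonal_flag_above:
  assumes B: "Vector_Spaces.linear scale scale B" "block_tridiagonal d E B"
    and x: "x \<in> flag_above k"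
  shows "B x \<in> flag_above (k - 1)"
  unfolding flag_above_def
proof (intro CollectI allI impI)
  fix j assume j: "j \<le> d" "j < k - 1"
  have "E j (B (E i x)) = 0" if "i \<le> d" for i
  proof (cases "i < k")
    case True
    then have "E i x = 0" using x that by (simp add: flag_above_def)
    then show ?thesis by (simp add: vsp.linear_0[OF B(1)] vsp.linear_0[OF linear_E[OF j(1)]])
  next
    case False
    then have "j + 2 \<le> i" using j by linarith
    then show ?thesis using block_tridiagonalD[OF B(2) j(1) that] by blast
  qed
  then show "E j (B x) = 0" using E_B_eq_sum[OF B(1) j(1), of x] by simp
qed

end

lemma T_module_swap:
  "T_module scale d th ths a e as es \<Longrightarrow> T_module scale d ths th as es a e"
  unfolding T_module_def imp_conjR all_conj_distrib by (elim conjE, intro conjI) assumption+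

lemma irreducible_T_module_swap:
  "irreducible_T_module scale d th ths a e as es \<Longrightarrow> irreducible_T_module scale d ths th as es a e"
  unfolding irreducible_T_module_def by (auto dest: T_module_swap)

lemma T_module_block_tridiagonal:
  assumes "T_module scale d th ths a e as es"
  shows "block_tridiagonal d e as"
  unfolding block_tridiagonal_def
proof (intro allI impI)
  fix i j v assume ij: "i \<le> d" "j \<le> d" "i + 2 \<le> j \<or> j + 2 \<le> i"
  then have "1 \<le> d" "1 < nat \<bar>int i - int j\<bar>" by auto
  then have "e i ((as ^^ 1) (e j v)) = 0"
    using assms ij(1,2) unfolding T_module_def by blast
  then show "e i (as (e j v)) = 0" by simp
qed

lemma (in vector_space) T_module_idempotent_decomposition:
  "T_module scale d th ths a e as es \<Longrightarrow> inj_on th {..d} \<Longrightarrow>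
    idempotent_decomposition scale d th a e"
  unfolding idempotent_decomposition_def idempotent_decomposition_axioms_def T_module_def
  by (elim conjE) (intro conjI vector_space_axioms; blast)

locale irreducible_T_space = vector_space scale
  for scale :: "'f::field \<Rightarrow> 'v::ab_group_add \<Rightarrow> 'v" +
  fixes d :: nat and th ths :: "nat \<Rightarrow> 'f"
    and a as :: "'v \<Rightarrow> 'v" and e es :: "nat \<Rightarrow> 'v \<Rightarrow> 'v"
  assumes irreducible: "irreducible_T_module scale d th ths a e as es"
    and inj_th: "inj_on th {..d}" and inj_ths: "inj_on ths {..d}"
begin

lemma T_module: "T_module scale d th ths a e as es"
  using irreducible unfolding irreducible_T_module_def by (rule conjunct1)

lemma linear_a: "Vector_Spaces.linear scale scale a"
  using T_module unfolding T_module_def by (rule conjunct1)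

lemma linear_as: "Vector_Spaces.linear scale scale as"
  using T_module unfolding T_module_def by (elim conjE)

sublocale dec: idempotent_decomposition scale d th a e
  by (rule T_module_idempotent_decomposition[OF T_module inj_th])

sublocale dec_s: idempotent_decomposition scale d ths as es
  by (rule T_module_idempotent_decomposition[OF T_module_swap[OF T_module] inj_ths])

lemma block_tridiagonal_as: "block_tridiagonal d e as"
  and block_tridiagonal_a: "block_tridiagonal d es a"
  by (rule T_module_block_tridiagonal[OF T_module],
      rule T_module_block_tridiagonal[OF T_module_swap[OF T_module]])

lemma invariant_subspace_trivial:
  assumes W: "subspace W" and aW: "a ` W \<subseteq> W" and asW: "as ` W \<subseteq> W"
  shows "W = {0} \<or> W = UNIV"
proof -
  have "\<forall>i\<le>d. e i ` W \<subseteq> W \<and> es i ` W \<subseteq> W"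
    using dec.E_image_invariant_subspace[OF W aW] dec_s.E_image_invariant_subspace[OF W asW]
    by simp
  moreover have "\<forall>W. subspace W \<and> a ` W \<subseteq> W \<and> as ` W \<subseteq> W
      \<and> (\<forall>i\<le>d. e i ` W \<subseteq> W \<and> es i ` W \<subseteq> W) \<longrightarrow> W = {0} \<or> W = UNIV"
    using irreducible unfolding irreducible_T_module_def by (elim conjE)
  ultimately show ?thesis using W aW asW by simp
qed

definition split_component :: "nat \<Rightarrow> nat \<Rightarrow> nat \<Rightarrow> 'v set" where
  "split_component r t i = dec_s.flag_below (r + i) \<inter> dec.flag_above (t + i)"

lemma a_minus_scale_split_component:
  assumes u: "u \<in> split_component r t i"
  shows "a u - scale (th (t + i)) u \<in> split_component r t (Suc i)"
proof -
  have "a u \<in> dec_s.flag_below (Suc (r + i))"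
    using u dec_s.block_tridiagonal_flag_below[OF linear_a block_tridiagonal_a]
    by (simp add: split_component_def)
  moreover have "scale (th (t + i)) u \<in> dec_s.flag_below (Suc (r + i))"
    using u dec_s.flag_below_mono[of "r + i" "Suc (r + i)"] dec_s.subspace_flag_below
    by (auto simp: split_component_def intro: subspace_scale)
  ultimately have "a u - scale (th (t + i)) u \<in> dec_s.flag_below (r + Suc i)"
    using dec_s.subspace_flag_below subspace_diff by fastforce
  then show ?thesis
    using u dec.A_minus_scale_flag_above by (simp add: split_component_def)
qed

lemma as_minus_scale_split_component:
  assumes u: "u \<in> split_component r t (Suc i)"
  shows "as u - scale (ths (r + Suc i)) u \<in> split_component r t i"
proof -
  have "as u \<in> dec.flag_above (t + i)"
    using u dec.block_tridiagonal_flag_above[OF linear_as block_tridiagonal_as]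
    by (fastforce simp: split_component_def)
  moreover have "scale (ths (r + Suc i)) u \<in> dec.flag_above (t + i)"
    using u unfolding split_component_def dec.flag_above_def
    by (auto simp: dec.vsp.linear_scale[OF dec.linear_E])
  ultimately have "as u - scale (ths (r + Suc i)) u \<in> dec.flag_above (t + i)"
    using dec.subspace_flag_above subspace_diff by blast
  then show ?thesis
    using u dec_s.A_minus_scale_flag_below[of u "r + Suc i"]
    by (simp add: split_component_def)
qed

lemma span_split_components_eq_UNIV:
  assumes r: "r \<le> d" and v: "es r v \<noteq> 0"
    and below_t: "\<forall>j\<le>d. j < t \<longrightarrow> (\<forall>x. e j x = 0)"
  shows "span (\<Union>i. split_component r t i) = UNIV"
proof -
  let ?G = "\<Union>i. split_component r t i"
  have span_invariant: "f ` span ?G \<subseteq> span ?G"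
    if f: "Vector_Spaces.linear scale scale f"
      and step: "\<And>u i. u \<in> split_component r t i \<Longrightarrow> \<exists>c. f u - scale c u \<in> ?G" for f
  proof -
    have "f u \<in> span ?G" if u: "u \<in> split_component r t i" for u i
    proof -
      obtain c where "f u - scale c u \<in> ?G" using step[OF u] by blast
      moreover have "u \<in> ?G" using u by blast
      ultimately have "(f u - scale c u) + scale c u \<in> span ?G"
        by (meson span_add span_base span_scale)
      then show ?thesis by simp
    qed
    then have "span (f ` ?G) \<subseteq> span ?G"
      by (intro span_minimal subspace_span) blast
    then show ?thesis by (simp add: dec.vsp.linear_span_image[OF f])
  qed
  have "a ` span ?G \<subseteq> span ?G"
    using span_invariant[OF linear_a] a_minus_scale_split_component by blast
  moreover have "as ` span ?G \<subseteq> span ?G"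
  proof (rule span_invariant[OF linear_as])
    fix u i assume u: "u \<in> split_component r t i"
    show "\<exists>c. as u - scale c u \<in> ?G"
    proof (cases i)
      case 0
      have "as u - scale (ths r) u \<in> dec_s.flag_below r"
        using u dec_s.A_minus_scale_flag_below[of u r] dec_s.flag_below_mono[of "r - 1" r]
        by (auto simp: split_component_def 0)
      then have "as u - scale (ths r) u \<in> split_component r t 0"
        using dec.flag_above_eq_UNIV[OF below_t] by (simp add: split_component_def)
      then show ?thesis by blast
    next
      case (Suc i')
      then show ?thesis using as_minus_scale_split_component u by blast
    qed
  qed
  moreover have "es r v \<in> split_component r t 0"
    using dec.flag_above_eq_UNIV[OF below_t] dec_s.E_E[OF _ r]
    by (simp add: split_component_def dec_s.flag_below_def)
  then have "span ?G \<noteq> {0}" using v by (blast intro: span_base)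
  ultimately show ?thesis using invariant_subspace_trivial[of "span ?G"] by auto
qed

lemma es_support_length_le:
  assumes rd: "r + \<delta> \<le> d"
    and es_supp: "\<forall>i\<le>d. (\<exists>v. es i v \<noteq> 0) \<longleftrightarrow> r \<le> i \<and> i \<le> r + \<delta>"
    and e_supp: "\<forall>i\<le>d. (\<exists>v. e i v \<noteq> 0) \<longleftrightarrow> t \<le> i \<and> i \<le> t + \<delta>s"
  shows "\<delta> \<le> \<delta>s"
proof (rule ccontr)
  assume "\<not> \<delta> \<le> \<delta>s"
  have top_vanishes: "es (r + \<delta>) x = 0" if x: "x \<in> split_component r t i" for x i
  proof (cases "i \<le> \<delta>s")
    case True
    then show ?thesis
      using x rd \<open>\<not> \<delta> \<le> \<delta>s\<close> by (simp add: split_component_def dec_s.flag_below_def)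
  next
    case False
    then have "\<forall>j\<le>d. e j x = 0"
      using x e_supp by (force simp: split_component_def dec.flag_above_def)
    then show ?thesis
      using dec.eq_0_if_E_eq_0 dec.vsp.linear_0[OF dec_s.linear_E] rd by auto
  qed
  have r: "r \<le> d" using rd by simp
  obtain v where v: "es r v \<noteq> 0" using es_supp[rule_format, OF r] by auto
  have "\<forall>j\<le>d. j < t \<longrightarrow> (\<forall>x. e j x = 0)" using e_supp by auto
  then have "span (\<Union>i. split_component r t i) = UNIV"
    using span_split_components_eq_UNIV[OF r v] by auto
  then have "es (r + \<delta>) x = 0" for x
    using dec.vsp.linear_eq_0_on_span[OF dec_s.linear_E[OF rd]] top_vanishes by blast
  moreover obtain w where "es (r + \<delta>) w \<noteq> 0" using es_supp[rule_format, OF rd] by auto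
  ultimately show False by blast
qed

end

theorem proposition5p4:
  fixes scale :: "'f::field \<Rightarrow> 'v::ab_group_add \<Rightarrow> 'v"
    and d :: nat and th ths :: "nat \<Rightarrow> 'f"
    and a as :: "'v \<Rightarrow> 'v" and e es :: "nat \<Rightarrow> 'v \<Rightarrow> 'v"
    and r \<delta> t \<delta>s :: nat
  assumes vs: "vector_space scale"
    and fin: "\<exists>B. finite B \<and> module.span scale B = UNIV"
    and th_dist: "inj_on th {..d}" and ths_dist: "inj_on ths {..d}"
    and recur: "\<exists>c::'f. \<forall>i. 2 \<le> i \<and> i + 1 \<le> d \<longrightarrow>
                 (th (i-2) - th (i+1)) / (th (i-1) - th i) = c \<and>
                 (ths (i-2) - ths (i+1)) / (ths (i-1) - ths i) = c"
    and irr: "irreducible_T_module scale d th ths a e as es"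
    and rd: "r + \<delta> \<le> d" and td: "t + \<delta>s \<le> d"
    and es_supp: "\<forall>i\<le>d. (\<exists>v. es i v \<noteq> 0) \<longleftrightarrow> r \<le> i \<and> i \<le> r + \<delta>"
    and e_supp: "\<forall>i\<le>d. (\<exists>v. e i v \<noteq> 0) \<longleftrightarrow> t \<le> i \<and> i \<le> t + \<delta>s"
  shows "\<delta> = \<delta>s \<and>
         tridiagonal_system scale a (\<lambda>i. e (t + i)) \<delta> as (\<lambda>i. es (r + i)) \<delta>"
proof -
  interpret M: irreducible_T_space scale d th ths a as e es
    by (intro irreducible_T_space.intro irreducible_T_space_axioms.intro vs irr th_dist ths_dist)
  interpret M': irreducible_T_space scale d ths th as a es e
    by (intro irreducible_T_space.intro irreducible_T_space_axioms.intro vs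
        irreducible_T_module_swap[OF irr] th_dist ths_dist)
  have "\<delta> \<le> \<delta>s" by (rule M.es_support_length_le[OF rd es_supp e_supp])
  moreover have "\<delta>s \<le> \<delta>" by (rule M'.es_support_length_le[OF td e_supp es_supp])
  ultimately have \<delta>: "\<delta> = \<delta>s" by simp
  show ?thesis
    unfolding tridiagonal_system_def
  proof (intro conjI allI impI)
    show "primitive_idempotent_seq scale a (\<lambda>i. e (t + i)) \<delta>"
      using M.dec.primitive_idempotent_seq_window td e_supp \<delta> by simp
    show "tridiagonal_action as (\<lambda>i. e (t + i)) \<delta>"
      using M.dec.tridiagonal_action_window[OF M.linear_as M.block_tridiagonal_as] td e_supp \<delta>
      by simp
  qed (use \<delta> M.linear_a M.linear_as M.invariant_subspace_trivial
        M.dec_s.primitive_idempotent_seq_window[OF rd es_supp]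
        M.dec_s.tridiagonal_action_window[OF M.linear_a M.block_tridiagonal_a rd es_supp] in auto)
qed

end
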